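(* For the uniform noising process on $[S]^d$ started from any $q_0$, and for every $i\in[d]$, $c\in[S]$, the function $\varphi_{i,c}(t)=\mathbb E_{x\sim q_t}[-\log s_t(x\oplus_ic,x)]$ is differentiable on $(0,\infty)$ and satisfies $$-\varphi_{i,c}'(t)\ge\varphi_{i,c}(t)\qquad\text{for all }t>0.$$ Consequently $\varphi(t)=\frac1S\sum_{i,c}\varphi_{i,c}(t)$ satisfies $-\varphi'(t)\ge\varphi(t)\ge0$, and $\varphi$ is non-increasing on $(0,\infty)$.
   Context: Uniform noising process: time-homogeneous CTMC on $[S]^d$ with rate $1/S$ between states at Hamming distance one and $0$ between states at Hamming distance $\ge2$; $q_t$ its time-$t$ law; $s_t(y,x)=q_t(y)/q_t(x)$. $x\oplus_i c$: $x$ with coordinate $i$ replaced by $(x^i+c)\bmod S$, convention $0\bmod S=S$. *)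

theory Defs
  imports "HOL-Analysis.Analysis" "HOL-Library.FuncSet"
begin

definition states :: "nat \<Rightarrow> nat \<Rightarrow> (nat \<Rightarrow> nat) set" where
  "states S d = PiE {1..d} (\<lambda>_. {1..S})"

definition hamming :: "nat \<Rightarrow> (nat \<Rightarrow> nat) \<Rightarrow> (nat \<Rightarrow> nat) \<Rightarrow> nat" where
  "hamming d x y = card {i \<in> {1..d}. x i \<noteq> y i}"

definition rate :: "nat \<Rightarrow> nat \<Rightarrow> (nat \<Rightarrow> nat) \<Rightarrow> (nat \<Rightarrow> nat) \<Rightarrow> real" where
  "rate S d x y = (if hamming d x y = 1 then 1 / real S else 0)"

definition gen :: "nat \<Rightarrow> nat \<Rightarrow> (nat \<Rightarrow> nat) \<Rightarrow> (nat \<Rightarrow> nat) \<Rightarrow> real" where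
  "gen S d x y = (if x = y then - (\<Sum>z\<in>states S d - {x}. rate S d x z) else rate S d x y)"

text \<open>q is the time-t law of the chain started from q0: the solution on [0,\<infinity>) of the
  Kolmogorov forward equation with initial law q0.\<close>
definition is_law :: "nat \<Rightarrow> nat \<Rightarrow> ((nat \<Rightarrow> nat) \<Rightarrow> real) \<Rightarrow> (real \<Rightarrow> (nat \<Rightarrow> nat) \<Rightarrow> real) \<Rightarrow> bool" where
  "is_law S d q0 q \<longleftrightarrow>
     (\<forall>y\<in>states S d. q 0 y = q0 y) \<and>
     (\<forall>t\<ge>0. \<forall>y\<in>states S d.
        ((\<lambda>\<tau>. q \<tau> y) has_real_derivative (\<Sum>x\<in>states S d. q t x * gen S d x y)) (at t within {0..}))"

text \<open>Cyclic shift with the convention 0 mod S = S.\<close>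
definition cshift :: "nat \<Rightarrow> nat \<Rightarrow> nat \<Rightarrow> nat" where
  "cshift S a c = (if (a + c) mod S = 0 then S else (a + c) mod S)"

definition oplus :: "nat \<Rightarrow> (nat \<Rightarrow> nat) \<Rightarrow> nat \<Rightarrow> nat \<Rightarrow> (nat \<Rightarrow> nat)" where
  "oplus S x i c = x(i := cshift S (x i) c)"

definition ratio :: "(real \<Rightarrow> (nat \<Rightarrow> nat) \<Rightarrow> real) \<Rightarrow> real \<Rightarrow> (nat \<Rightarrow> nat) \<Rightarrow> (nat \<Rightarrow> nat) \<Rightarrow> real" where
  "ratio q t y x = q t y / q t x"

definition phi_ic :: "nat \<Rightarrow> nat \<Rightarrow> (real \<Rightarrow> (nat \<Rightarrow> nat) \<Rightarrow> real) \<Rightarrow> nat \<Rightarrow> nat \<Rightarrow> real \<Rightarrow> real" where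
  "phi_ic S d q i c t = (\<Sum>x\<in>states S d. q t x * (- ln (ratio q t (oplus S x i c) x)))"

definition phi :: "nat \<Rightarrow> nat \<Rightarrow> (real \<Rightarrow> (nat \<Rightarrow> nat) \<Rightarrow> real) \<Rightarrow> real \<Rightarrow> real" where
  "phi S d q t = (1 / real S) * (\<Sum>i\<in>{1..d}. \<Sum>c\<in>{1..S}. phi_ic S d q i c t)"

end

theory Submission
  imports Defs
begin

(* For t > 0 the law q_t charges every state, and phi_{i,c}(t) is the relative entropy
   KL(q_t || q_t(. (+)_i c)) of q_t with respect to its own shift.  The generator acts as
   "resample coordinate j uniformly, minus the identity", summed over j, and it commutes with
   the shift.  Hence the time derivative of this relative entropy splits into one term per
   coordinate j.  By ln u <= u - 1, the j-th term is at most the relative entropy of the two laws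
   with coordinate j summed out, minus phi_{i,c}; as summing out a coordinate cannot increase
   relative entropy, this is <= 0.  For j = i the two summed-out laws coincide, because the shift
   only moves coordinate i, so that term is at most -phi_{i,c}.  Altogether phi_{i,c}' <= -phi_{i,c},
   and phi_{i,c} >= 0 by Gibbs' inequality; phi inherits both as an average of the phi_{i,c}. *)

section \<open>The state space and its coordinate fibres\<close>

lemma states_upd:
  assumes "x \<in> states S d" "j \<in> {1..d}" "a \<in> {1..S}"
  shows "x(j := a) \<in> states S d"
  using assms unfolding states_def by (auto simp: PiE_iff extensional_def)

lemma states_coord: "x \<in> states S d \<Longrightarrow> j \<in> {1..d} \<Longrightarrow> x j \<in> {1..S}"
  unfolding states_def by auto

lemma states_eqI:
  "x \<in> states S d \<Longrightarrow> y \<in> states S d \<Longrightarrow> (\<And>i. i \<in> {1..d} \<Longrightarrow> x i = y i) \<Longrightarrow> x = y"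
  unfolding states_def by (rule PiE_ext)

lemma finite_states: "finite (states S d)"
  unfolding states_def by (rule finite_PiE) auto

lemma states_induct_upd:
  assumes "y \<in> states S d" "x \<in> states S d" "P x"
    and step: "\<And>z j. z \<in> states S d \<Longrightarrow> j \<in> {1..d} \<Longrightarrow> P (z(j := x j)) \<Longrightarrow> P z"
  shows "P y"
  using assms(1)
proof (induction "hamming d y x" arbitrary: y)
  case 0
  then have "y = x"
    using assms(2) by (intro states_eqI) (auto simp: hamming_def)
  then show ?case using assms(3) by simp
next
  case (Suc n)
  then have "card {i \<in> {1..d}. y i \<noteq> x i} > 0"
    by (simp add: hamming_def)
  then obtain j where j: "j \<in> {1..d}" "y j \<noteq> x j"
    by (auto simp: card_gt_0_iff)
  have "{i \<in> {1..d}. (y(j := x j)) i \<noteq> x i} = {i \<in> {1..d}. y i \<noteq> x i} - {j}"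
    by auto
  then have "hamming d (y(j := x j)) x = n"
    using Suc.hyps(2) j by (simp add: hamming_def)
  moreover have "y(j := x j) \<in> states S d"
    using states_upd[OF Suc.prems j(1) states_coord[OF assms(2) j(1)]] .
  ultimately show ?case using Suc.hyps(1) step[OF Suc.prems j(1)] by blast
qed

lemma sum_states_fiber_swap:
  assumes "j \<in> {1..d}"
  shows "(\<Sum>x\<in>states S d. \<Sum>a\<in>{1..S}. h (x(j := a)) x) = (\<Sum>x\<in>states S d. \<Sum>a\<in>{1..S}. h x (x(j := a)))"
proof -
  define \<sigma> where "\<sigma> = (\<lambda>(x :: nat \<Rightarrow> nat, a :: nat). (x(j := a), x j))"
  have \<sigma>_in: "\<sigma> p \<in> states S d \<times> {1..S}" if "p \<in> states S d \<times> {1..S}" for p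
    using that states_upd[OF _ assms] states_coord[OF _ assms] unfolding \<sigma>_def by (auto simp del: atLeastAtMost_iff)
  have \<sigma>_\<sigma>: "\<sigma> (\<sigma> p) = p" for p
    by (cases p) (simp add: \<sigma>_def)
  have h_\<sigma>: "(\<lambda>(x, a). h x (x(j := a))) (\<sigma> p) = (\<lambda>(x, a). h (x(j := a)) x) p" for p
    by (cases p) (simp add: \<sigma>_def)
  have "(\<Sum>(x, a)\<in>states S d \<times> {1..S}. h (x(j := a)) x) = (\<Sum>(x, a)\<in>states S d \<times> {1..S}. h x (x(j := a)))"
    by (rule sum.reindex_bij_witness[where i=\<sigma> and j=\<sigma>]) (use \<sigma>_\<sigma> \<sigma>_in h_\<sigma> in blast)+
  then show ?thesis by (simp add: sum.cartesian_product)
qed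

(* The marginal of p on the coordinates other than j, evaluated at x. *)
definition fiber_sum :: "nat \<Rightarrow> ((nat \<Rightarrow> nat) \<Rightarrow> real) \<Rightarrow> nat \<Rightarrow> (nat \<Rightarrow> nat) \<Rightarrow> real" where
  "fiber_sum S p j x = (\<Sum>a\<in>{1..S}. p (x(j := a)))"

lemma fiber_sum_upd [simp]: "fiber_sum S p j (x(j := a)) = fiber_sum S p j x"
  by (simp add: fiber_sum_def)

lemma fiber_sum_pos:
  assumes "S \<ge> 1" "j \<in> {1..d}" "x \<in> states S d" "\<And>y. y \<in> states S d \<Longrightarrow> p y > 0"
  shows "fiber_sum S p j x > 0"
  unfolding fiber_sum_def using assms by (intro sum_pos) (auto simp: states_upd)

lemma fiber_sum_nonneg:
  assumes "x \<in> states S d" "j \<in> {1..d}" "\<And>y. y \<in> states S d \<Longrightarrow> p y \<ge> 0"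
  shows "fiber_sum S p j x \<ge> 0"
  unfolding fiber_sum_def using assms(3)[OF states_upd[OF assms(1,2)]] by (intro sum_nonneg) auto

lemma sum_fiber_sum_ge:
  assumes "x \<in> states S d" "j \<in> {1..d}" "b \<in> {1..S}" "\<And>y. y \<in> states S d \<Longrightarrow> p y \<ge> 0"
  shows "p (x(j := b)) \<le> (\<Sum>k\<in>{1..d}. fiber_sum S p k x)"
proof -
  have "p (x(j := b)) \<le> fiber_sum S p j x"
    unfolding fiber_sum_def using assms(3) assms(4)[OF states_upd[OF assms(1,2)]]
    by (intro member_le_sum[where f="\<lambda>a. p (x(j := a))"]) auto
  also have "\<dots> \<le> (\<Sum>k\<in>{1..d}. fiber_sum S p k x)"
    using assms fiber_sum_nonneg by (intro member_le_sum) auto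
  finally show ?thesis .
qed

lemma sum_fiber_sum_mult:
  assumes "j \<in> {1..d}" and K: "\<And>x a. x \<in> states S d \<Longrightarrow> a \<in> {1..S} \<Longrightarrow> K (x(j := a)) = K x"
  shows "(\<Sum>x\<in>states S d. fiber_sum S p j x * K x) = real S * (\<Sum>x\<in>states S d. p x * K x)"
proof -
  have "(\<Sum>x\<in>states S d. fiber_sum S p j x * K x) = (\<Sum>x\<in>states S d. \<Sum>a\<in>{1..S}. p (x(j := a)) * K x)"
    by (simp add: fiber_sum_def sum_distrib_right)
  also have "\<dots> = (\<Sum>x\<in>states S d. \<Sum>a\<in>{1..S}. p x * K (x(j := a)))"
    by (rule sum_states_fiber_swap[OF assms(1)])
  also have "\<dots> = (\<Sum>x\<in>states S d. real S * (p x * K x))"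
    using K by (intro sum.cong) auto
  finally show ?thesis by (simp add: sum_distrib_left)
qed

section \<open>The generator\<close>

(* Jumping to each neighbour at rate 1/S is the same as resampling each coordinate uniformly
   at rate 1 (the resampled value may be the old one); this is the resulting forward operator. *)
definition gen_action :: "nat \<Rightarrow> nat \<Rightarrow> ((nat \<Rightarrow> nat) \<Rightarrow> real) \<Rightarrow> (nat \<Rightarrow> nat) \<Rightarrow> real" where
  "gen_action S d p y = (\<Sum>j\<in>{1..d}. fiber_sum S p j y / real S - p y)"

lemma neighbours_eq_image:
  assumes y: "y \<in> states S d"
  shows "{x \<in> states S d. hamming d x y = 1} = (\<lambda>(j, a). y(j := a)) ` (SIGMA j:{1..d}. {1..S} - {y j})"
proof (intro equalityI subsetI)
  fix x assume x: "x \<in> {x \<in> states S d. hamming d x y = 1}"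
  then have "card {i \<in> {1..d}. x i \<noteq> y i} = 1"
    by (simp add: hamming_def)
  then obtain j where J: "{i \<in> {1..d}. x i \<noteq> y i} = {j}"
    by (rule card_1_singletonE)
  then have j: "j \<in> {1..d}" "x j \<noteq> y j" by auto
  have x_states: "x \<in> states S d" using x by simp
  have "x = y(j := x j)"
  proof (rule states_eqI[of _ S d])
    show "y(j := x j) \<in> states S d"
      using states_upd[OF y j(1) states_coord[OF x_states j(1)]] .
    show "x i = (y(j := x j)) i" if "i \<in> {1..d}" for i
      using J that by (cases "i = j") auto
  qed (fact x_states)
  then show "x \<in> (\<lambda>(j, a). y(j := a)) ` (SIGMA j:{1..d}. {1..S} - {y j})"
    using j states_coord[OF x_states j(1)] by (auto intro!: image_eqI[where x="(j, x j)"])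
next
  fix x assume "x \<in> (\<lambda>(j, a). y(j := a)) ` (SIGMA j:{1..d}. {1..S} - {y j})"
  then obtain p where p: "p \<in> (SIGMA j:{1..d}. {1..S} - {y j})" "x = (\<lambda>(j, a). y(j := a)) p" ..
  obtain j a where "p = (j, a)" by fastforce
  with p have ja: "j \<in> {1..d}" "a \<in> {1..S}" "a \<noteq> y j" and x: "x = y(j := a)"
    by auto
  then have "{i \<in> {1..d}. x i \<noteq> y i} = {j}" by auto
  then show "x \<in> {x \<in> states S d. hamming d x y = 1}"
    using x ja y by (simp add: hamming_def states_upd)
qed

lemma sum_fiber_remove:
  assumes "y \<in> states S d" "j \<in> {1..d}"
  shows "(\<Sum>a\<in>{1..S} - {y j}. F (y(j := a))) = fiber_sum S F j y - F y"
  using sum.remove[of "{1..S}" "y j" "\<lambda>a. F (y(j := a))"] states_coord[OF assms]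
  by (simp add: fiber_sum_def)

lemma sum_rate_mult:
  assumes y: "y \<in> states S d"
  shows "(\<Sum>x\<in>states S d - {y}. rate S d x y * F x) = (\<Sum>j\<in>{1..d}. fiber_sum S F j y - F y) / real S"
proof -
  have inj: "inj_on (\<lambda>(j, a). y(j := a)) (SIGMA j:{1..d}. {1..S} - {y j})"
    unfolding inj_on_def by clarsimp (metis fun_upd_apply)
  have "(\<Sum>x\<in>states S d - {y}. rate S d x y * F x) = (\<Sum>x\<in>states S d - {y}. if hamming d x y = 1 then F x / real S else 0)"
    by (intro sum.cong) (auto simp: rate_def)
  also have "\<dots> = (\<Sum>x\<in>{x \<in> states S d - {y}. hamming d x y = 1}. F x / real S)"
    by (rule sum.inter_filter[symmetric]) (simp add: finite_states)
  also have "{x \<in> states S d - {y}. hamming d x y = 1} = {x \<in> states S d. hamming d x y = 1}"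
    by (auto simp: hamming_def)
  also have "(\<Sum>x\<in>\<dots>. F x / real S) = (\<Sum>(j, a)\<in>(SIGMA j:{1..d}. {1..S} - {y j}). F (y(j := a)) / real S)"
    unfolding neighbours_eq_image[OF y] by (subst sum.reindex[OF inj]) (simp add: case_prod_unfold)
  also have "\<dots> = (\<Sum>j\<in>{1..d}. \<Sum>a\<in>{1..S} - {y j}. F (y(j := a)) / real S)"
    by (subst sum.Sigma[symmetric]) auto
  also have "\<dots> = (\<Sum>j\<in>{1..d}. fiber_sum S F j y - F y) / real S"
    using sum_fiber_remove[OF y] by (simp add: sum_divide_distrib[symmetric])
  finally show ?thesis .
qed

lemma gen_action_gain_loss:
  "gen_action S d p y = (\<Sum>j\<in>{1..d}. fiber_sum S p j y) / real S - real d * p y"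
  by (simp add: gen_action_def sum_subtractf sum_divide_distrib)

lemma rate_sym: "rate S d x y = rate S d y x"
proof -
  have "{i \<in> {1..d}. x i \<noteq> y i} = {i \<in> {1..d}. y i \<noteq> x i}"
    by auto
  then show ?thesis by (simp add: rate_def hamming_def)
qed

lemma sum_mult_gen:
  assumes y: "y \<in> states S d" and "S \<ge> 1"
  shows "(\<Sum>x\<in>states S d. p x * gen S d x y) = gen_action S d p y"
proof -
  have off_diagonal: "(\<Sum>x\<in>states S d - {y}. p x * gen S d x y) = (\<Sum>j\<in>{1..d}. fiber_sum S p j y - p y) / real S"
    using sum_rate_mult[OF y, of p] by (simp add: gen_def mult.commute)
  have "gen S d y y = - (\<Sum>x\<in>states S d - {y}. rate S d x y * 1)"
    by (simp add: gen_def rate_sym[of S d y])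
  also have "\<dots> = - real d * (real S - 1) / real S"
    using sum_rate_mult[OF y, of "\<lambda>_. 1"] by (simp add: fiber_sum_def)
  finally have diagonal: "gen S d y y = - real d * (real S - 1) / real S" .
  have "(\<Sum>x\<in>states S d. p x * gen S d x y) = p y * gen S d y y + (\<Sum>x\<in>states S d - {y}. p x * gen S d x y)"
    by (rule sum.remove[OF finite_states y])
  also have "\<dots> = (\<Sum>j\<in>{1..d}. fiber_sum S p j y) / real S - real d * p y"
    using \<open>S \<ge> 1\<close> unfolding off_diagonal diagonal by (simp add: sum_subtractf field_simps)
  also have "\<dots> = gen_action S d p y"
    by (simp add: gen_action_gain_loss)
  finally show ?thesis .
qed

lemma sum_mult_gen_action:
  "(\<Sum>y\<in>states S d. w y * gen_action S d p y) =
     (\<Sum>j\<in>{1..d}. (\<Sum>y\<in>states S d. w y * fiber_sum S p j y) / real S - (\<Sum>y\<in>states S d. w y * p y))"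
proof -
  have "(\<Sum>y\<in>states S d. w y * gen_action S d p y) =
      (\<Sum>y\<in>states S d. \<Sum>j\<in>{1..d}. w y * fiber_sum S p j y / real S - w y * p y)"
    unfolding gen_action_def by (simp add: sum_distrib_left right_diff_distrib)
  also have "\<dots> = (\<Sum>j\<in>{1..d}. \<Sum>y\<in>states S d. w y * fiber_sum S p j y / real S - w y * p y)"
    by (rule sum.swap)
  finally show ?thesis by (simp only: sum_subtractf sum_divide_distrib)
qed

lemma sum_gen_action:
  assumes "S \<ge> 1"
  shows "(\<Sum>y\<in>states S d. gen_action S d p y) = 0"
proof -
  have "(\<Sum>y\<in>states S d. gen_action S d p y) =
      (\<Sum>j\<in>{1..d}. (\<Sum>y\<in>states S d. fiber_sum S p j y * 1) / real S - (\<Sum>y\<in>states S d. p y * 1))"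
    using sum_mult_gen_action[of "\<lambda>_. 1" S d p] by simp
  also have "\<dots> = 0"
  proof (intro sum.neutral ballI)
    fix j assume "j \<in> {1..d}"
    then have "(\<Sum>y\<in>states S d. fiber_sum S p j y * 1) = real S * (\<Sum>y\<in>states S d. p y * 1)"
      by (rule sum_fiber_sum_mult) simp
    with assms show "(\<Sum>y\<in>states S d. fiber_sum S p j y * 1) / real S - (\<Sum>y\<in>states S d. p y * 1) = 0"
      by simp
  qed
  finally show ?thesis .
qed

lemma fiber_dirichlet_form:
  assumes "j \<in> {1..d}"
  shows "(\<Sum>y\<in>states S d. \<Sum>a\<in>{1..S}. (w (y(j := a)) - w y) * (p (y(j := a)) - p y))
       = 2 * (real S * (\<Sum>y\<in>states S d. w y * p y) - (\<Sum>y\<in>states S d. w y * fiber_sum S p j y))"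
proof -
  have diag: "(\<Sum>y\<in>states S d. \<Sum>a\<in>{1..S}. w (y(j := a)) * p (y(j := a))) = real S * (\<Sum>y\<in>states S d. w y * p y)"
    using sum_states_fiber_swap[OF assms, where S=S and h="\<lambda>u v. w u * p u"] by (simp add: sum_distrib_left)
  have cross: "(\<Sum>y\<in>states S d. \<Sum>a\<in>{1..S}. w (y(j := a)) * p y) = (\<Sum>y\<in>states S d. w y * fiber_sum S p j y)"
    using sum_states_fiber_swap[OF assms, where S=S and h="\<lambda>u v. w u * p v"] by (simp add: fiber_sum_def sum_distrib_left)
  have "(\<Sum>y\<in>states S d. \<Sum>a\<in>{1..S}. (w (y(j := a)) - w y) * (p (y(j := a)) - p y))
      = (\<Sum>y\<in>states S d. \<Sum>a\<in>{1..S}. w (y(j := a)) * p (y(j := a))) - (\<Sum>y\<in>states S d. \<Sum>a\<in>{1..S}. w (y(j := a)) * p y)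
        - (\<Sum>y\<in>states S d. w y * fiber_sum S p j y) + real S * (\<Sum>y\<in>states S d. w y * p y)"
    by (simp add: algebra_simps sum.distrib sum_subtractf fiber_sum_def sum_distrib_left)
  then show ?thesis unfolding diag cross by simp
qed

lemma sum_mult_gen_action_dirichlet:
  assumes "S \<ge> 1"
  shows "(\<Sum>y\<in>states S d. w y * gen_action S d p y) =
    - (\<Sum>j\<in>{1..d}. \<Sum>y\<in>states S d. \<Sum>a\<in>{1..S}. (w (y(j := a)) - w y) * (p (y(j := a)) - p y)) / (2 * real S)"
proof -
  define X where "X j = (\<Sum>y\<in>states S d. w y * fiber_sum S p j y)" for j
  define Y where "Y = (\<Sum>y\<in>states S d. w y * p y)"
  have "(\<Sum>j\<in>{1..d}. \<Sum>y\<in>states S d. \<Sum>a\<in>{1..S}. (w (y(j := a)) - w y) * (p (y(j := a)) - p y))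
      = (\<Sum>j\<in>{1..d}. 2 * (real S * Y - X j))"
    unfolding X_def Y_def by (intro sum.cong refl) (rule fiber_dirichlet_form)
  then have "- (\<Sum>j\<in>{1..d}. \<Sum>y\<in>states S d. \<Sum>a\<in>{1..S}. (w (y(j := a)) - w y) * (p (y(j := a)) - p y)) / (2 * real S)
      = (\<Sum>j\<in>{1..d}. - (2 * (real S * Y - X j)) / (2 * real S))"
    by (simp only: sum_negf[symmetric] sum_divide_distrib)
  also have "\<dots> = (\<Sum>j\<in>{1..d}. X j / real S - Y)"
    using assms by (intro sum.cong) (auto simp: field_simps)
  finally show ?thesis unfolding X_def Y_def sum_mult_gen_action by simp
qed

lemma sum_mono_mult_gen_action_nonpos:
  assumes "S \<ge> 1" "mono \<phi>"
  shows "(\<Sum>y\<in>states S d. \<phi> (p y) * gen_action S d p y) \<le> 0"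
proof -
  have "(\<phi> v - \<phi> u) * (v - u) \<ge> 0" for u v :: real
    using monoD[OF assms(2), of u v] monoD[OF assms(2), of v u]
    by (cases "u \<le> v") (auto intro: mult_nonneg_nonneg mult_nonpos_nonpos)
  then have "(\<Sum>j\<in>{1..d}. \<Sum>y\<in>states S d. \<Sum>a\<in>{1..S}. (\<phi> (p (y(j := a))) - \<phi> (p y)) * (p (y(j := a)) - p y)) \<ge> 0"
    by (intro sum_nonneg) auto
  then show ?thesis
    using assms(1) by (simp add: sum_mult_gen_action_dirichlet[OF assms(1), where w="\<lambda>y. \<phi> (p y)"])
qed

lemma DERIV_within_nonpos_imp_nonincreasing:
  fixes f f' :: "real \<Rightarrow> real"
  assumes "a \<le> b"
    and der: "\<And>t. t \<in> {a..b} \<Longrightarrow> (f has_real_derivative f' t) (at t within {a..b})"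
    and nonpos: "\<And>t. t \<in> {a..b} \<Longrightarrow> f' t \<le> 0"
  shows "f b \<le> f a"
proof (rule DERIV_nonpos_imp_decreasing_open[OF \<open>a \<le> b\<close>])
  fix t assume t: "a < t" "t < b"
  then have "at t within {a..b} = at t"
    by (intro at_within_interior) auto
  then show "\<exists>y. DERIV f t :> y \<and> y \<le> 0"
    using der[of t] nonpos[of t] t by auto
next
  show "continuous_on {a..b} f"
    unfolding continuous_on_eq_continuous_within using der DERIV_continuous by blast
qed

lemma has_real_derivative_min_zero_sq:
  "((\<lambda>x::real. (min x 0)\<^sup>2) has_real_derivative 2 * min x 0) (at x within s)"
proof -
  consider "x < 0" | "x = 0" | "x > 0" by linarith
  then have "((\<lambda>x::real. (min x 0)\<^sup>2) has_real_derivative 2 * min x 0) (at x)"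
  proof cases
    case 1
    have "((\<lambda>x::real. x\<^sup>2) has_real_derivative 2 * min x 0) (at x)"
      using 1 by (auto intro!: derivative_eq_intros)
    then show ?thesis
      by (rule has_field_derivative_transform_within_open[where S="{..<0}"]) (use 1 in auto)
  next
    case 2
    have quotient: "(min h 0)\<^sup>2 / h = min h 0" for h :: real
      by (cases "h < 0") (auto simp: min_def power2_eq_square)
    have "((\<lambda>h::real. min h 0) \<longlongrightarrow> 0) (at 0)"
      by (auto intro!: tendsto_eq_intros)
    then show ?thesis
      using 2 by (simp add: DERIV_def quotient)
  next
    case 3
    have "((\<lambda>x::real. 0) has_real_derivative 2 * min x 0) (at x)"
      using 3 by simp
    then show ?thesis
      by (rule has_field_derivative_transform_within_open[where S="{0<..}"]) (use 3 in auto)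
  qed
  then show ?thesis by (rule has_field_derivative_at_within)
qed

section \<open>Relative entropy\<close>

definition kl_div :: "'a set \<Rightarrow> ('a \<Rightarrow> real) \<Rightarrow> ('a \<Rightarrow> real) \<Rightarrow> real" where
  "kl_div X f g = (\<Sum>x\<in>X. f x * ln (f x / g x))"

lemma kl_div_ge_sum_diff:
  assumes f: "\<And>x. x \<in> X \<Longrightarrow> f x > 0" and g: "\<And>x. x \<in> X \<Longrightarrow> g x > 0"
  shows "sum f X - sum g X \<le> kl_div X f g"
proof -
  have "f x - g x \<le> f x * ln (f x / g x)" if x: "x \<in> X" for x
  proof -
    have "ln (g x / f x) \<le> g x / f x - 1"
      using f[OF x] g[OF x] by (intro ln_le_minus_one) simp
    then have "f x * ln (g x / f x) \<le> g x - f x"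
      using f[OF x] by (simp add: field_simps)
    then show ?thesis
      using f[OF x] g[OF x] by (simp add: ln_div algebra_simps)
  qed
  then show ?thesis
    unfolding kl_div_def sum_subtractf[symmetric] by (rule sum_mono)
qed

lemma has_real_derivative_kl_div:
  fixes f g :: "real \<Rightarrow> 'a \<Rightarrow> real"
  assumes "finite X"
    and f': "\<And>x. x \<in> X \<Longrightarrow> ((\<lambda>t. f t x) has_real_derivative f' x) (at t)"
    and g': "\<And>x. x \<in> X \<Longrightarrow> ((\<lambda>t. g t x) has_real_derivative g' x) (at t)"
    and f: "\<And>x. x \<in> X \<Longrightarrow> f t x > 0" and g: "\<And>x. x \<in> X \<Longrightarrow> g t x > 0"
  shows "((\<lambda>t. kl_div X (f t) (g t)) has_real_derivative
           (\<Sum>x\<in>X. f' x * ln (f t x / g t x) + f' x - f t x * g' x / g t x)) (at t)"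
  unfolding kl_div_def
proof (rule DERIV_sum)
  fix x assume x: "x \<in> X"
  show "((\<lambda>t. f t x * ln (f t x / g t x)) has_real_derivative
          f' x * ln (f t x / g t x) + f' x - f t x * g' x / g t x) (at t)"
    using f[OF x] g[OF x]
    by (auto intro!: derivative_eq_intros f'[OF x] g'[OF x] simp: field_simps power2_eq_square)
qed

lemma sum_fiber_log_ratio_le_kl_div:
  assumes "S \<ge> 1" "j \<in> {1..d}"
    and f: "\<And>x. x \<in> states S d \<Longrightarrow> f x > 0" and g: "\<And>x. x \<in> states S d \<Longrightarrow> g x > 0"
  shows "(\<Sum>x\<in>states S d. f x * ln (fiber_sum S f j x / fiber_sum S g j x)) \<le> kl_div (states S d) f g"
proof -
  define R where "R x = fiber_sum S f j x / fiber_sum S g j x" for x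
  have F: "fiber_sum S f j x > 0" and G: "fiber_sum S g j x > 0" if "x \<in> states S d" for x
    using fiber_sum_pos[OF assms(1,2) that] f g by auto
  have pointwise: "f x * ln (R x) \<le> f x * ln (f x / g x) + (g x * R x - f x)" if x: "x \<in> states S d" for x
  proof -
    have R: "R x > 0" using F[OF x] G[OF x] by (simp add: R_def)
    have "ln (R x * g x / f x) \<le> R x * g x / f x - 1"
      using R f[OF x] g[OF x] by (intro ln_le_minus_one) simp
    then have "f x * ln (R x * g x / f x) \<le> g x * R x - f x"
      using f[OF x] by (simp add: field_simps)
    then show ?thesis
      using R f[OF x] g[OF x] by (simp add: ln_div ln_mult algebra_simps)
  qed
  have "real S * (\<Sum>x\<in>states S d. g x * R x) = (\<Sum>x\<in>states S d. fiber_sum S g j x * R x)"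
    using assms(2) by (rule sum_fiber_sum_mult[symmetric]) (simp add: R_def)
  also have "\<dots> = (\<Sum>x\<in>states S d. fiber_sum S f j x * 1)"
  proof (intro sum.cong refl)
    fix x assume "x \<in> states S d"
    then show "fiber_sum S g j x * R x = fiber_sum S f j x * 1"
      using G by (simp add: R_def less_imp_neq[symmetric])
  qed
  also have "\<dots> = real S * (\<Sum>x\<in>states S d. f x * 1)"
    using assms(2) by (rule sum_fiber_sum_mult) simp
  finally have "(\<Sum>x\<in>states S d. g x * R x) = sum f (states S d)"
    using assms(1) by simp
  moreover have "(\<Sum>x\<in>states S d. f x * ln (R x))
      \<le> (\<Sum>x\<in>states S d. f x * ln (f x / g x) + (g x * R x - f x))"
    by (rule sum_mono) (rule pointwise)
  ultimately show ?thesis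
    unfolding kl_div_def R_def[symmetric] by (simp add: sum.distrib sum_subtractf)
qed

lemma fiber_cross_terms_le:
  assumes "S \<ge> 1" "j \<in> {1..d}"
    and f: "\<And>x. x \<in> states S d \<Longrightarrow> f x > 0" and g: "\<And>x. x \<in> states S d \<Longrightarrow> g x > 0"
  shows "(\<Sum>x\<in>states S d. ln (f x / g x) * fiber_sum S f j x) / real S
           - (\<Sum>x\<in>states S d. f x / g x * fiber_sum S g j x) / real S + sum f (states S d)
         \<le> (\<Sum>x\<in>states S d. f x * ln (fiber_sum S f j x / fiber_sum S g j x))"
proof -
  define R where "R x = fiber_sum S f j x / fiber_sum S g j x" for x
  have F: "fiber_sum S f j x > 0" and G: "fiber_sum S g j x > 0" if "x \<in> states S d" for x
    using fiber_sum_pos[OF assms(1,2) that] f g by auto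
  have pointwise: "ln (f x / g x) * fiber_sum S f j x - f x / g x * fiber_sum S g j x
      \<le> fiber_sum S f j x * ln (R x) - fiber_sum S f j x * 1" if x: "x \<in> states S d" for x
  proof -
    define r where "r = f x / g x"
    have r: "r > 0" and R: "R x > 0"
      using F[OF x] G[OF x] f[OF x] g[OF x] by (simp_all add: r_def R_def)
    have "ln (r / R x) \<le> r / R x - 1"
      using r R by (intro ln_le_minus_one) simp
    then have "fiber_sum S f j x * ln (r / R x) \<le> fiber_sum S f j x * (r / R x - 1)"
      using F[OF x] by (intro mult_left_mono) auto
    also have "fiber_sum S f j x * (r / R x - 1) = r * fiber_sum S g j x - fiber_sum S f j x"
      using F[OF x] G[OF x] by (simp add: R_def field_simps)
    finally show ?thesis
      using r R unfolding r_def[symmetric] by (simp add: ln_div algebra_simps)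
  qed
  have "(\<Sum>x\<in>states S d. ln (f x / g x) * fiber_sum S f j x) - (\<Sum>x\<in>states S d. f x / g x * fiber_sum S g j x)
      \<le> (\<Sum>x\<in>states S d. fiber_sum S f j x * ln (R x)) - (\<Sum>x\<in>states S d. fiber_sum S f j x * 1)"
    using sum_mono[OF pointwise] by (simp add: sum_subtractf)
  also have "\<dots> = real S * (\<Sum>x\<in>states S d. f x * ln (R x)) - real S * (\<Sum>x\<in>states S d. f x * 1)"
    using assms(2) by (simp only: sum_fiber_sum_mult R_def fiber_sum_upd)
  finally show ?thesis
    using assms(1) unfolding R_def by (simp add: field_simps)
qed

lemma sum_gen_action_kl_div_dissipation:
  assumes "S \<ge> 1" "i \<in> {1..d}"
    and f: "\<And>x. x \<in> states S d \<Longrightarrow> f x > 0" and g: "\<And>x. x \<in> states S d \<Longrightarrow> g x > 0"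
    and same_fiber: "\<And>x. x \<in> states S d \<Longrightarrow> fiber_sum S g i x = fiber_sum S f i x"
  shows "(\<Sum>x\<in>states S d. gen_action S d f x * ln (f x / g x) + gen_action S d f x
            - f x * gen_action S d g x / g x) \<le> - kl_div (states S d) f g"
proof -
  let ?D = "kl_div (states S d) f g"
  define B where "B j = (\<Sum>x\<in>states S d. ln (f x / g x) * fiber_sum S f j x) / real S
      - (\<Sum>x\<in>states S d. f x / g x * fiber_sum S g j x) / real S + sum f (states S d) - ?D" for j
  have B_le: "B j \<le> (\<Sum>x\<in>states S d. f x * ln (fiber_sum S f j x / fiber_sum S g j x)) - ?D"
    if "j \<in> {1..d}" for j
    using fiber_cross_terms_le[OF assms(1) that, where f=f and g=g, OF f g] unfolding B_def by linarith
  have "(\<Sum>x\<in>states S d. f x * ln (fiber_sum S f i x / fiber_sum S g i x)) = 0"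
  proof (intro sum.neutral ballI)
    fix x assume x: "x \<in> states S d"
    show "f x * ln (fiber_sum S f i x / fiber_sum S g i x) = 0"
      using fiber_sum_pos[OF assms(1,2) x f] same_fiber[OF x] by simp
  qed
  then have "B i \<le> - ?D"
    using B_le[OF assms(2)] by simp
  moreover have "B j \<le> 0" if "j \<in> {1..d} - {i}" for j
    using B_le sum_fiber_log_ratio_le_kl_div[OF assms(1) _ f g] that by fastforce
  ultimately have "(\<Sum>j\<in>{1..d}. B j) \<le> - ?D"
    using assms(2) sum_nonpos[of "{1..d} - {i}" B] by (simp add: sum.remove)
  moreover have "(\<Sum>x\<in>states S d. gen_action S d f x * ln (f x / g x) + gen_action S d f x
      - f x * gen_action S d g x / g x) = (\<Sum>j\<in>{1..d}. B j)"
  proof -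
    have "(\<Sum>x\<in>states S d. f x * gen_action S d g x / g x) = (\<Sum>x\<in>states S d. f x / g x * gen_action S d g x)"
      by simp
    moreover have "(\<Sum>x\<in>states S d. f x / g x * g x) = sum f (states S d)"
      using g by (intro sum.cong) (auto simp: less_imp_neq[symmetric])
    ultimately show ?thesis
      using sum_mult_gen_action[where w="\<lambda>x. ln (f x / g x)" and p=f]
        sum_mult_gen_action[where w="\<lambda>x. f x / g x" and p=g] sum_gen_action[OF assms(1), of d f]
      by (simp add: B_def kl_div_def sum.distrib sum_subtractf mult.commute)
  qed
  ultimately show ?thesis by simp
qed

section \<open>Cyclic shifts\<close>

lemma cshift_in: "S \<ge> 1 \<Longrightarrow> cshift S a c \<in> {1..S}"
  unfolding cshift_def by (auto simp: le_less)

lemma cshift_mod: "cshift S a c mod S = (a + c) mod S"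
  unfolding cshift_def by simp

lemma inj_on_cshift: "inj_on (\<lambda>a. cshift S a c) {1..S}"
proof (rule linorder_inj_onI')
  fix a b assume "a < b" "a \<in> {1..S}" "b \<in> {1..S}"
  then have "\<not> S dvd (b + c) - (a + c)"
    by (auto dest: dvd_imp_le)
  then have "(b + c) mod S \<noteq> (a + c) mod S"
    using \<open>a < b\<close> by (simp add: mod_eq_dvd_iff_nat)
  then show "cshift S a c \<noteq> cshift S b c"
    by (metis cshift_mod)
qed

lemma sum_cshift:
  assumes "S \<ge> 1"
  shows "(\<Sum>a\<in>{1..S}. h (cshift S a c)) = (\<Sum>a\<in>{1..S}. h a)"
proof -
  have "(\<lambda>a. cshift S a c) ` {1..S} = {1..S}"
    using cshift_in[OF assms] inj_on_cshift by (intro endo_inj_surj) auto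
  then show ?thesis
    using sum.reindex[OF inj_on_cshift[of S c], of h] by simp
qed

lemma states_oplus: "S \<ge> 1 \<Longrightarrow> x \<in> states S d \<Longrightarrow> i \<in> {1..d} \<Longrightarrow> oplus S x i c \<in> states S d"
  unfolding oplus_def by (intro states_upd cshift_in)

lemma inj_on_oplus:
  assumes "i \<in> {1..d}"
  shows "inj_on (\<lambda>x. oplus S x i c) (states S d)"
proof (rule inj_onI)
  fix x y assume x: "x \<in> states S d" and y: "y \<in> states S d" and eq: "oplus S x i c = oplus S y i c"
  then have "cshift S (x i) c = cshift S (y i) c"
    unfolding oplus_def by (metis fun_upd_same)
  then have "x i = y i"
    using inj_onD[OF inj_on_cshift[of S c]] states_coord[OF x assms] states_coord[OF y assms] by blast
  then show "x = y"
    using eq unfolding oplus_def by (metis fun_upd_triv fun_upd_upd)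
qed

lemma sum_states_oplus:
  assumes "S \<ge> 1" "i \<in> {1..d}"
  shows "(\<Sum>x\<in>states S d. h (oplus S x i c)) = (\<Sum>x\<in>states S d. h x)"
proof -
  have "(\<lambda>x. oplus S x i c) ` states S d = states S d"
    using states_oplus[OF assms(1) _ assms(2)] inj_on_oplus[OF assms(2)]
    by (intro endo_inj_surj) (auto simp: finite_states)
  then show ?thesis
    using sum.reindex[OF inj_on_oplus[OF assms(2), of S c], of h] by simp
qed

lemma fiber_sum_oplus:
  assumes "S \<ge> 1"
  shows "fiber_sum S (\<lambda>y. p (oplus S y i c)) j x = fiber_sum S p j (oplus S x i c)"
proof (cases "j = i")
  case True
  then show ?thesis
    using sum_cshift[OF assms, where h="\<lambda>b. p (x(i := b))"] by (simp add: fiber_sum_def oplus_def)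
next
  case False
  then show ?thesis
    by (simp add: fiber_sum_def oplus_def fun_upd_twist)
qed

lemma gen_action_oplus:
  assumes "S \<ge> 1"
  shows "gen_action S d (\<lambda>y. p (oplus S y i c)) x = gen_action S d p (oplus S x i c)"
  by (simp add: gen_action_def fiber_sum_oplus[OF assms])

lemma fiber_sum_oplus_same:
  assumes "S \<ge> 1"
  shows "fiber_sum S (\<lambda>y. p (oplus S y i c)) i x = fiber_sum S p i x"
  using fiber_sum_oplus[OF assms, of p i c i x] by (simp add: oplus_def)

section \<open>The law of the noising process\<close>

locale uniform_noising =
  fixes S d :: nat and q0 :: "(nat \<Rightarrow> nat) \<Rightarrow> real" and q :: "real \<Rightarrow> (nat \<Rightarrow> nat) \<Rightarrow> real"
  assumes S_pos: "S \<ge> 1"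
    and q0_nonneg: "\<forall>x\<in>states S d. q0 x \<ge> 0"
    and q0_sum: "(\<Sum>x\<in>states S d. q0 x) = 1"
    and law: "is_law S d q0 q"
begin

lemma law_init: "y \<in> states S d \<Longrightarrow> q 0 y = q0 y"
  using law unfolding is_law_def by auto

lemma has_derivative_law:
  assumes "t \<ge> 0" "y \<in> states S d"
  shows "((\<lambda>\<tau>. q \<tau> y) has_real_derivative gen_action S d (q t) y) (at t within {0..})"
proof -
  have "((\<lambda>\<tau>. q \<tau> y) has_real_derivative (\<Sum>x\<in>states S d. q t x * gen S d x y)) (at t within {0..})"
    using law assms unfolding is_law_def by blast
  then show ?thesis
    by (simp add: sum_mult_gen[OF assms(2) S_pos])
qed

lemma has_derivative_law_at:
  assumes "t > 0" "y \<in> states S d"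
  shows "((\<lambda>\<tau>. q \<tau> y) has_real_derivative gen_action S d (q t) y) (at t)"
proof -
  have "at t within {0..} = at t"
    using assms(1) by (intro at_within_interior) auto
  then show ?thesis
    using has_derivative_law[of t y] assms by simp
qed

lemma law_nonneg:
  assumes "t \<ge> 0" "y \<in> states S d"
  shows "q t y \<ge> 0"
proof -
  define N where "N \<tau> = (\<Sum>y\<in>states S d. (min (q \<tau> y) 0)\<^sup>2)" for \<tau>
  define N' where "N' \<tau> = (\<Sum>y\<in>states S d. 2 * min (q \<tau> y) 0 * gen_action S d (q \<tau>) y)" for \<tau>
  have "(N has_real_derivative N' \<tau>) (at \<tau> within {0..t})" if "\<tau> \<in> {0..t}" for \<tau>
    unfolding N_def N'_def
  proof (rule DERIV_sum)
    fix y assume "y \<in> states S d"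
    with that have "((\<lambda>\<tau>. q \<tau> y) has_real_derivative gen_action S d (q \<tau>) y) (at \<tau> within {0..t})"
      by (intro has_field_derivative_subset[OF has_derivative_law]) auto
    then show "((\<lambda>\<tau>. (min (q \<tau> y) 0)\<^sup>2) has_real_derivative 2 * min (q \<tau> y) 0 * gen_action S d (q \<tau>) y)
        (at \<tau> within {0..t})"
      by (rule DERIV_chain2[OF has_real_derivative_min_zero_sq])
  qed
  moreover have "N' \<tau> \<le> 0" for \<tau>
    unfolding N'_def by (rule sum_mono_mult_gen_action_nonpos[OF S_pos]) (auto simp: mono_def min_def)
  ultimately have "N t \<le> N 0"
    by (rule DERIV_within_nonpos_imp_nonincreasing[OF assms(1)])
  also have "N 0 = 0"
    unfolding N_def using law_init q0_nonneg by (intro sum.neutral) auto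
  finally have "(\<Sum>y\<in>states S d. (min (q t y) 0)\<^sup>2) \<le> 0"
    by (simp add: N_def)
  moreover have "(min (q t y) 0)\<^sup>2 \<le> (\<Sum>y\<in>states S d. (min (q t y) 0)\<^sup>2)"
    by (rule member_le_sum[OF assms(2)]) (auto simp: finite_states)
  ultimately have "(min (q t y) 0)\<^sup>2 \<le> 0"
    by linarith
  then show ?thesis
    by (simp add: min_def split: if_splits)
qed

(* Multiplying by exp (d t) cancels the loss term of the generator and leaves the gain term,
   which is nonnegative, and positive as soon as a neighbour carries mass.  So positivity spreads
   from a state charged by q0 to every state, one coordinate at a time. *)
lemma has_derivative_exp_law:
  assumes "t \<ge> 0" "y \<in> states S d"
  shows "((\<lambda>\<tau>. exp (real d * \<tau>) * q \<tau> y) has_real_derivative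
           exp (real d * t) * ((\<Sum>j\<in>{1..d}. fiber_sum S (q t) j y) / real S)) (at t within {0..})"
proof -
  have "((\<lambda>\<tau>. exp (real d * \<tau>)) has_real_derivative exp (real d * t) * real d) (at t within {0..})"
    by (auto intro!: derivative_eq_intros)
  from DERIV_mult[OF this has_derivative_law[OF assms]] show ?thesis
    by (rule DERIV_cong) (simp add: gen_action_gain_loss algebra_simps)
qed

lemma exp_law_mono:
  assumes "0 \<le> s" "s \<le> t" "y \<in> states S d"
  shows "exp (real d * s) * q s y \<le> exp (real d * t) * q t y"
proof -
  have "- (exp (real d * t) * q t y) \<le> - (exp (real d * s) * q s y)"
  proof (rule DERIV_within_nonpos_imp_nonincreasing[OF assms(2)])
    fix \<tau> assume \<tau>: "\<tau> \<in> {s..t}"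
    then show "((\<lambda>\<tau>. - (exp (real d * \<tau>) * q \<tau> y)) has_real_derivative
        - (exp (real d * \<tau>) * ((\<Sum>j\<in>{1..d}. fiber_sum S (q \<tau>) j y) / real S))) (at \<tau> within {s..t})"
      using assms by (intro DERIV_minus has_field_derivative_subset[OF has_derivative_exp_law]) auto
    have "(\<Sum>j\<in>{1..d}. fiber_sum S (q \<tau>) j y) \<ge> 0"
      using \<tau> assms law_nonneg fiber_sum_nonneg by (intro sum_nonneg) auto
    then show "- (exp (real d * \<tau>) * ((\<Sum>j\<in>{1..d}. fiber_sum S (q \<tau>) j y) / real S)) \<le> 0"
      by simp
  qed
  then show ?thesis by simp
qed

lemma law_pos_of_init:
  assumes "x \<in> states S d" "q0 x > 0" "t \<ge> 0"
  shows "q t x > 0"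
proof -
  have "q0 x \<le> exp (real d * t) * q t x"
    using exp_law_mono[OF order_refl assms(3) assms(1)] law_init[OF assms(1)] by simp
  then have "exp (real d * t) * q t x > 0"
    using assms(2) by linarith
  then show ?thesis
    by (simp add: zero_less_mult_iff)
qed

lemma law_pos_of_neighbour:
  assumes z: "z \<in> states S d" and j: "j \<in> {1..d}" and b: "b \<in> {1..S}"
    and neighbour: "\<forall>s>0. q s (z(j := b)) > 0" and "t > 0"
  shows "q t z > 0"
proof -
  have "exp (real d * (t / 2)) * q (t / 2) z < exp (real d * t) * q t z"
  proof (rule DERIV_pos_imp_increasing[where f="\<lambda>\<tau>. exp (real d * \<tau>) * q \<tau> z"])
    fix \<tau> assume \<tau>: "t / 2 \<le> \<tau>" "\<tau> \<le> t"
    with \<open>t > 0\<close> have "0 < \<tau>" by simp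
    then have "at \<tau> within {0..} = at \<tau>"
      by (intro at_within_interior) auto
    then have "((\<lambda>\<tau>. exp (real d * \<tau>) * q \<tau> z) has_real_derivative
        exp (real d * \<tau>) * ((\<Sum>k\<in>{1..d}. fiber_sum S (q \<tau>) k z) / real S)) (at \<tau>)"
      using has_derivative_exp_law[OF _ z, of \<tau>] \<open>0 < \<tau>\<close> by simp
    moreover have "0 < (\<Sum>k\<in>{1..d}. fiber_sum S (q \<tau>) k z)"
    proof -
      have "0 < q \<tau> (z(j := b))"
        using neighbour \<open>0 < \<tau>\<close> by simp
      also have "\<dots> \<le> (\<Sum>k\<in>{1..d}. fiber_sum S (q \<tau>) k z)"
        using sum_fiber_sum_ge[OF z j b, of "q \<tau>"] law_nonneg[of \<tau>] \<open>0 < \<tau>\<close> by simp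
      finally show ?thesis .
    qed
    ultimately show "\<exists>D. DERIV (\<lambda>\<tau>. exp (real d * \<tau>) * q \<tau> z) \<tau> :> D \<and> D > 0"
      using S_pos by (intro exI[of _ "exp (real d * \<tau>) * ((\<Sum>k\<in>{1..d}. fiber_sum S (q \<tau>) k z) / real S)"]) auto
  qed (use \<open>t > 0\<close> in simp)
  moreover have "0 \<le> exp (real d * (t / 2)) * q (t / 2) z"
    using law_nonneg z \<open>t > 0\<close> by simp
  ultimately have "exp (real d * t) * q t z > 0"
    by linarith
  then show ?thesis
    by (simp add: zero_less_mult_iff)
qed

lemma law_pos:
  assumes "t > 0" "y \<in> states S d"
  shows "q t y > 0"
proof -
  obtain x0 where x0: "x0 \<in> states S d" "q0 x0 > 0"
    using q0_sum q0_nonneg sum_nonpos[of "states S d" q0] by force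
  have "\<forall>t>0. q t y > 0"
  proof (rule states_induct_upd[OF assms(2) x0(1)])
    show "\<forall>t>0. q t x0 > 0"
      using law_pos_of_init[OF x0] by simp
  next
    fix z j assume "z \<in> states S d" "j \<in> {1..d}" "\<forall>t>0. q t (z(j := x0 j)) > 0"
    then show "\<forall>t>0. q t z > 0"
      using law_pos_of_neighbour states_coord[OF x0(1)] by blast
  qed
  then show ?thesis using assms(1) by blast
qed

lemma phi_ic_eq_kl_div:
  assumes "t > 0" "i \<in> {1..d}"
  shows "phi_ic S d q i c t = kl_div (states S d) (q t) (\<lambda>x. q t (oplus S x i c))"
  unfolding phi_ic_def kl_div_def ratio_def
proof (intro sum.cong refl)
  fix x assume x: "x \<in> states S d"
  show "q t x * - ln (q t (oplus S x i c) / q t x) = q t x * ln (q t x / q t (oplus S x i c))"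
    using law_pos[OF assms(1) x] law_pos[OF assms(1) states_oplus[OF S_pos x assms(2)]]
    by (simp add: ln_div algebra_simps)
qed

lemma phi_ic_nonneg:
  assumes "t > 0" "i \<in> {1..d}"
  shows "phi_ic S d q i c t \<ge> 0"
proof -
  have "0 = (\<Sum>x\<in>states S d. q t x) - (\<Sum>x\<in>states S d. q t (oplus S x i c))"
    by (simp add: sum_states_oplus[OF S_pos assms(2)])
  also have "\<dots> \<le> phi_ic S d q i c t"
    unfolding phi_ic_eq_kl_div[OF assms]
    using law_pos[OF assms(1)] states_oplus[OF S_pos _ assms(2)] by (intro kl_div_ge_sum_diff) auto
  finally show ?thesis .
qed

lemma phi_ic_dissipation:
  assumes "t > 0" "i \<in> {1..d}"
  shows "phi_ic S d q i c differentiable (at t) \<and> phi_ic S d q i c t \<le> - deriv (phi_ic S d q i c) t"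
proof -
  let ?g = "\<lambda>\<tau> x. q \<tau> (oplus S x i c)"
  define D where "D = (\<Sum>x\<in>states S d. gen_action S d (q t) x * ln (q t x / ?g t x)
      + gen_action S d (q t) x - q t x * gen_action S d (?g t) x / ?g t x)"
  have f: "q t x > 0" and g: "?g t x > 0" if "x \<in> states S d" for x
    using law_pos[OF assms(1)] states_oplus[OF S_pos that assms(2)] that by auto
  have "((\<lambda>\<tau>. kl_div (states S d) (q \<tau>) (?g \<tau>)) has_real_derivative D) (at t)"
    unfolding D_def
  proof (rule has_real_derivative_kl_div[where f=q and g="?g", OF finite_states])
    fix x assume x: "x \<in> states S d"
    show "((\<lambda>\<tau>. q \<tau> x) has_real_derivative gen_action S d (q t) x) (at t)"
      by (rule has_derivative_law_at[OF assms(1) x])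
  next
    fix x assume x: "x \<in> states S d"
    show "((\<lambda>\<tau>. ?g \<tau> x) has_real_derivative gen_action S d (?g t) x) (at t)"
      unfolding gen_action_oplus[OF S_pos]
      by (rule has_derivative_law_at[OF assms(1) states_oplus[OF S_pos x assms(2)]])
  qed (use f g in auto)
  then have "(phi_ic S d q i c has_real_derivative D) (at t)"
    by (rule has_field_derivative_transform_within_open[where S="{0<..}"])
       (use assms in \<open>auto simp: phi_ic_eq_kl_div\<close>)
  moreover have "D \<le> - phi_ic S d q i c t"
    unfolding D_def phi_ic_eq_kl_div[OF assms]
    by (rule sum_gen_action_kl_div_dissipation[where f="q t" and g="?g t",
          OF S_pos assms(2) f g fiber_sum_oplus_same[OF S_pos]])
  ultimately show ?thesis
    using DERIV_imp_deriv real_differentiable_def by fastforce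
qed

lemma phi_dissipation:
  assumes "t > 0"
  shows "phi S d q differentiable (at t) \<and> phi S d q t \<le> - deriv (phi S d q) t \<and> phi S d q t \<ge> 0"
proof -
  let ?D = "\<lambda>i c. deriv (phi_ic S d q i c) t"
  have phi_eq: "phi S d q = (\<lambda>t. 1 / real S * (\<Sum>i\<in>{1..d}. \<Sum>c\<in>{1..S}. phi_ic S d q i c t))"
    by (simp add: fun_eq_iff phi_def)
  have D: "(phi_ic S d q i c has_real_derivative ?D i c) (at t)" if "i \<in> {1..d}" for i c
    using phi_ic_dissipation[OF assms that] DERIV_deriv_iff_real_differentiable by blast
  have "(phi S d q has_real_derivative 1 / real S * (\<Sum>i\<in>{1..d}. \<Sum>c\<in>{1..S}. ?D i c)) (at t)"
    unfolding phi_eq by (intro DERIV_cmult DERIV_sum D)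
  then have "phi S d q differentiable (at t)"
    and deriv_phi: "deriv (phi S d q) t = 1 / real S * (\<Sum>i\<in>{1..d}. \<Sum>c\<in>{1..S}. ?D i c)"
    using DERIV_imp_deriv real_differentiable_def by blast+
  moreover have "phi S d q t \<le> 1 / real S * (\<Sum>i\<in>{1..d}. \<Sum>c\<in>{1..S}. - ?D i c)"
    unfolding phi_def using phi_ic_dissipation[OF assms] by (intro mult_left_mono sum_mono) auto
  moreover have "phi S d q t \<ge> 0"
    unfolding phi_def using phi_ic_nonneg[OF assms] by (intro mult_nonneg_nonneg sum_nonneg) auto
  ultimately show ?thesis
    by (simp add: sum_negf)
qed

lemma phi_antimono:
  assumes "0 < s" "s \<le> t"
  shows "phi S d q t \<le> phi S d q s"
proof (rule DERIV_nonpos_imp_nonincreasing[OF assms(2)])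
  fix x assume "s \<le> x" "x \<le> t"
  with assms have "x > 0" by simp
  then show "\<exists>y. DERIV (phi S d q) x :> y \<and> y \<le> 0"
    using phi_dissipation[of x] DERIV_deriv_iff_real_differentiable by fastforce
qed

end

theorem mainTheorem17:
  fixes S d :: nat
    and q0 :: "(nat \<Rightarrow> nat) \<Rightarrow> real"
    and q :: "real \<Rightarrow> (nat \<Rightarrow> nat) \<Rightarrow> real"
  assumes q0_nonneg: "\<forall>x\<in>states S d. q0 x \<ge> 0"
    and q0_sum: "(\<Sum>x\<in>states S d. q0 x) = 1"
    and law: "is_law S d q0 q"
  shows "(\<forall>i\<in>{1..d}. \<forall>c\<in>{1..S}. \<forall>t>0.
            phi_ic S d q i c differentiable (at t) \<and>
            - deriv (phi_ic S d q i c) t \<ge> phi_ic S d q i c t)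
       \<and> (\<forall>t>0. phi S d q differentiable (at t) \<and>
            - deriv (phi S d q) t \<ge> phi S d q t \<and> phi S d q t \<ge> 0)
       \<and> (\<forall>s t. 0 < s \<longrightarrow> s \<le> t \<longrightarrow> phi S d q t \<le> phi S d q s)"
proof (cases "S = 0")
  case True
  (* The factor 1 / real S of phi is 0 here, and {1..S} is empty. *)
  then have "phi S d q = (\<lambda>_. 0)"
    by (simp add: fun_eq_iff phi_def)
  then show ?thesis
    using True by simp
next
  case False
  then interpret uniform_noising S d q0 q
    using q0_nonneg q0_sum law by unfold_locales simp_all
  show ?thesis
    using phi_ic_dissipation phi_dissipation phi_antimono by simp
qed

end
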